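(* Let $0\le\lambda<\gamma\le\delta$ and let $\mathfrak{f}=\mathfrak{s}+\overline{\mathfrak{t}}\in\mathcal{H}^0$ with $\mathfrak{s}(z)=z+\sum_{m\ge2}a_mz^m$, $\mathfrak{t}(z)=\sum_{m\ge2}b_mz^m$. If $$\sum_{m=2}^\infty m^2[2\gamma+(\delta-\gamma)(m-1)](|a_m|+|b_m|)\le2(\gamma-\lambda),$$ then $\mathfrak{f}\in\mathcal{R}_H^0(\gamma,\delta,\lambda)$.
   Context: Let $\mathcal{U}=\{z\in\mathbb{C}:|z|<1\}$. $\mathcal{H}^0$ denotes the class of complex-valued harmonic functions $\mathfrak{f}=\mathfrak{s}+\overline{\mathfrak{t}}$ on $\mathcal{U}$, where $\mathfrak{s}(z)=z+\sum_{m\ge2}a_mz^m$ and $\mathfrak{t}(z)=\sum_{m\ge2}b_mz^m$ are analytic in $\mathcal{U}$. For real $0\le\lambda<\gamma\le\delta$, $\mathcal{R}_H^0(\gamma,\delta,\lambda)$ is the class of $\mathfrak{f}=\mathfrak{s}+\overline{\mathfrak{t}}\in\mathcal{H}^0$ such that for all $z\in\mathcal{U}$, $\mathrm{Re}\left[\gamma\mathfrak{s}'(z)+\delta z\mathfrak{s}''(z)+\frac{\delta-\gamma}{2}z^2\mathfrak{s}'''(z)-\lambda\right]>\left|\gamma\mathfrak{t}'(z)+\delta z\mathfrak{t}''(z)+\frac{\delta-\gamma}{2}z^2\mathfrak{t}'''(z)\right|$. *)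

theory Defs
  imports "HOL-Complex_Analysis.Complex_Analysis"
begin

abbreviation unit_disk :: "complex set" where
  "unit_disk \<equiv> ball 0 1"

text \<open>Membership of f = s + conj t in the class H^0: s, t analytic on U,
  normalized by s(0) = 0, s'(0) = 1, t(0) = 0, t'(0) = 0.\<close>
definition in_H0 :: "(complex \<Rightarrow> complex) \<Rightarrow> (complex \<Rightarrow> complex) \<Rightarrow> bool" where
  "in_H0 s t \<longleftrightarrow> s holomorphic_on unit_disk \<and> t holomorphic_on unit_disk \<and>
     s 0 = 0 \<and> deriv s 0 = 1 \<and> t 0 = 0 \<and> deriv t 0 = 0"

definition Lop :: "real \<Rightarrow> real \<Rightarrow> (complex \<Rightarrow> complex) \<Rightarrow> complex \<Rightarrow> complex" where
  "Lop \<gamma> \<delta> h z = of_real \<gamma> * deriv h z + of_real \<delta> * z * (deriv ^^ 2) h z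
     + of_real ((\<delta> - \<gamma>) / 2) * z ^ 2 * (deriv ^^ 3) h z"

definition in_RH0 :: "real \<Rightarrow> real \<Rightarrow> real \<Rightarrow> (complex \<Rightarrow> complex) \<Rightarrow> (complex \<Rightarrow> complex) \<Rightarrow> bool" where
  "in_RH0 \<gamma> \<delta> lam s t \<longleftrightarrow> in_H0 s t \<and>
     (\<forall>z\<in>unit_disk. Re (Lop \<gamma> \<delta> s z - of_real lam) > norm (Lop \<gamma> \<delta> t z))"

end

theory Submission
  imports Defs
begin

(* The operator Lop acts diagonally on monomials: Lop (z^m) = w m * z^(m-1) with
   w m = m^2 (2 gamma + (delta - gamma)(m - 1)) / 2, and w 1 = gamma.  Differentiating the
   power series termwise therefore gives, on the unit disk,
     |Lop s z - gamma| <= |z| * sum_{m>=2} w m |a m|   and   |Lop t z| <= |z| * sum_{m>=2} w m |b m|,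
   and the hypothesis says exactly that these two sums add up to at most gamma - lambda.
   Since |z| < 1, Re (Lop s z) - lambda >= gamma - lambda - |z| sum w m |a m| > |Lop t z|. *)

lemma deriv_power_series_sums:
  fixes c :: "nat \<Rightarrow> 'a::{real_normed_field,banach}"
  assumes sums: "\<forall>w\<in>ball 0 r. (\<lambda>n. c n * w ^ n) sums f w" and z: "z \<in> ball 0 r"
  shows "(\<lambda>n. diffs c n * z ^ n) sums deriv f z"
proof -
  have sums': "\<And>w. norm w < r \<Longrightarrow> (\<lambda>n. c n * w ^ n) sums f w"
    using sums by simp
  have "norm z < r" using z by simp
  have "((\<lambda>w. \<Sum>n. c n * w ^ n) has_field_derivative (\<Sum>n. diffs c n * z ^ n)) (at z)"
    using sums' sums_summable \<open>norm z < r\<close> by (blast intro: termdiffs_strong')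
  moreover have "\<forall>\<^sub>F w in nhds z. (\<Sum>n. c n * w ^ n) = f w"
    using eventually_nhds_in_open[OF open_ball z]
    by eventually_elim (use sums' in \<open>auto simp: sums_iff\<close>)
  ultimately have deriv: "(f has_field_derivative (\<Sum>n. diffs c n * z ^ n)) (at z)"
    by (simp add: DERIV_cong_ev)
  show ?thesis
    using termdiffs_sums_strong[OF sums' deriv \<open>norm z < r\<close>] DERIV_imp_deriv[OF deriv] by simp
qed

lemma higher_deriv_power_series_sums:
  fixes c :: "nat \<Rightarrow> 'a::{real_normed_field,banach}"
  assumes "\<forall>w\<in>ball 0 r. (\<lambda>n. c n * w ^ n) sums f w" and "z \<in> ball 0 r"
  shows "(\<lambda>n. (diffs ^^ k) c n * z ^ n) sums (deriv ^^ k) f z"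
  using assms(2)
proof (induction k arbitrary: z)
  case 0
  then show ?case using assms(1) by simp
next
  case (Suc k)
  then show ?case by (simp add: deriv_power_series_sums[where r = r])
qed

lemma funpow_diffs:
  "(diffs ^^ k) c n = (\<Prod>i<k. of_nat (n + k) - of_nat i) * c (n + k)"
proof (induction k arbitrary: n)
  case 0
  then show ?case by simp
next
  case (Suc k)
  have "(diffs ^^ Suc k) c n = of_nat (Suc n) * (diffs ^^ k) c (Suc n)"
    by (simp add: diffs_def)
  also have "\<dots> = (\<Prod>i<Suc k. of_nat (n + Suc k) - of_nat i) * c (n + Suc k)"
    by (simp add: Suc.IH algebra_simps)
  finally show ?case .
qed

lemma power_mult_higher_deriv_sums:
  fixes c :: "nat \<Rightarrow> 'a::{real_normed_field,banach}"
  assumes "\<forall>w\<in>ball 0 r. (\<lambda>n. c n * w ^ n) sums f w" and "z \<in> ball 0 r"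
  shows "(\<lambda>n. (\<Prod>i<k. of_nat n - of_nat i) * c n * z ^ n) sums (z ^ k * (deriv ^^ k) f z)"
proof -
  have "(\<lambda>n. z ^ k * ((diffs ^^ k) c n * z ^ n)) sums (z ^ k * (deriv ^^ k) f z)"
    using higher_deriv_power_series_sums[OF assms] by (rule sums_mult)
  moreover have "z ^ k * ((diffs ^^ k) c n * z ^ n)
      = (\<Prod>i<k. of_nat (n + k) - of_nat i) * c (n + k) * z ^ (n + k)" for n
    by (simp add: funpow_diffs power_add algebra_simps)
  moreover have "(\<Prod>i<k. of_nat n - of_nat i :: 'a) = 0" if "n < k" for n
    using that by (auto intro: prod_zero)
  ultimately show ?thesis
    by (subst sums_zero_iff_shift[of k, symmetric]) auto
qed

lemma norm_sums_sub_const_le: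
  fixes g :: "nat \<Rightarrow> 'a::{real_normed_field,banach}"
  assumes sums: "(\<lambda>n. g n * z ^ n) sums S" and "norm z \<le> 1"
    and summable: "summable (\<lambda>n. norm (g (Suc n)))"
  shows "norm (S - g 0) \<le> norm z * (\<Sum>n. norm (g (Suc n)))"
proof -
  have bound: "norm (g (Suc n) * z ^ Suc n) \<le> norm z * norm (g (Suc n))" for n
  proof -
    have "norm z ^ n * norm (g (Suc n)) \<le> norm (g (Suc n))"
      using \<open>norm z \<le> 1\<close> by (simp add: mult_left_le_one_le power_le_one)
    then have "norm z * (norm z ^ n * norm (g (Suc n))) \<le> norm z * norm (g (Suc n))"
      by (simp add: mult_left_mono)
    then show ?thesis
      by (simp add: norm_mult norm_power mult_ac)
  qed
  have "(\<lambda>n. g (Suc n) * z ^ Suc n) sums (S - g 0)"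
    using sums sums_Suc_iff[of "\<lambda>n. g n * z ^ n"] by simp
  then have "norm (S - g 0) = norm (\<Sum>n. g (Suc n) * z ^ Suc n)"
    by (simp add: sums_iff)
  also have "\<dots> \<le> (\<Sum>n. norm z * norm (g (Suc n)))"
    using bound summable_mult[OF summable] by (rule norm_suminf_le)
  also have "\<dots> = norm z * (\<Sum>n. norm (g (Suc n)))"
    using summable by (rule suminf_mult)
  finally show ?thesis .
qed

definition Lop_multiplier :: "real \<Rightarrow> real \<Rightarrow> nat \<Rightarrow> real" where
  "Lop_multiplier \<gamma> \<delta> m = real m ^ 2 * (2 * \<gamma> + (\<delta> - \<gamma>) * (real m - 1)) / 2"

lemma Lop_multiplier_nonneg:
  assumes "0 \<le> \<gamma>" and "\<gamma> \<le> \<delta>"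
  shows "0 \<le> Lop_multiplier \<gamma> \<delta> m"
  using assms by (cases m) (simp_all add: Lop_multiplier_def)

lemma Lop_multiplier_Suc:
  "Lop_multiplier \<gamma> \<delta> (Suc n)
     = (\<gamma> + \<delta> * real n + (\<delta> - \<gamma>) / 2 * (real n * (real n - 1))) * real (Suc n)"
  by (simp add: Lop_multiplier_def field_simps power2_eq_square)

lemma Lop_power_series_sums:
  fixes c :: "nat \<Rightarrow> complex"
  assumes sums: "\<forall>w\<in>ball 0 r. (\<lambda>n. c n * w ^ n) sums f w" and z: "z \<in> ball 0 r"
  shows "(\<lambda>n. of_real (Lop_multiplier \<gamma> \<delta> (Suc n)) * c (Suc n) * z ^ n) sums Lop \<gamma> \<delta> f z"
proof -
  have sums': "\<forall>w\<in>ball 0 r. (\<lambda>n. diffs c n * w ^ n) sums deriv f w"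
    using sums deriv_power_series_sums by blast
  have "(\<lambda>n. of_real \<gamma> * ((\<Prod>i<0. of_nat n - of_nat i) * diffs c n * z ^ n)
        + of_real \<delta> * ((\<Prod>i<1. of_nat n - of_nat i) * diffs c n * z ^ n)
        + of_real ((\<delta> - \<gamma>) / 2) * ((\<Prod>i<2. of_nat n - of_nat i) * diffs c n * z ^ n))
      sums (of_real \<gamma> * (z ^ 0 * (deriv ^^ 0) (deriv f) z)
        + of_real \<delta> * (z ^ 1 * (deriv ^^ 1) (deriv f) z)
        + of_real ((\<delta> - \<gamma>) / 2) * (z ^ 2 * (deriv ^^ 2) (deriv f) z))"
    (is "?series sums ?value")
    by (intro sums_add sums_mult power_mult_higher_deriv_sums[OF sums' z])
  also have "?value = Lop \<gamma> \<delta> f z"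
    by (simp add: Lop_def numeral_2_eq_2 numeral_3_eq_3 algebra_simps)
  also have "?series = (\<lambda>n. of_real (Lop_multiplier \<gamma> \<delta> (Suc n)) * c (Suc n) * z ^ n)"
    by (simp add: Lop_multiplier_Suc diffs_def numeral_2_eq_2 field_simps)
  finally show ?thesis .
qed

lemma norm_Lop_sub_le:
  fixes c :: "nat \<Rightarrow> complex"
  assumes sums: "\<forall>w\<in>unit_disk. (\<lambda>n. c n * w ^ n) sums f w" and z: "z \<in> unit_disk"
    and "0 \<le> \<gamma>" and "\<gamma> \<le> \<delta>"
    and summable: "summable (\<lambda>k. Lop_multiplier \<gamma> \<delta> (k + 2) * norm (c (k + 2)))"
  shows "norm (Lop \<gamma> \<delta> f z - of_real \<gamma> * c 1)
    \<le> norm z * (\<Sum>k. Lop_multiplier \<gamma> \<delta> (k + 2) * norm (c (k + 2)))"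
proof -
  define g where "g n = of_real (Lop_multiplier \<gamma> \<delta> (Suc n)) * c (Suc n)" for n
  have norm_g: "norm (g (Suc k)) = Lop_multiplier \<gamma> \<delta> (k + 2) * norm (c (k + 2))" for k
    using Lop_multiplier_nonneg[OF \<open>0 \<le> \<gamma>\<close> \<open>\<gamma> \<le> \<delta>\<close>] by (simp add: g_def norm_mult)
  have "g 0 = of_real \<gamma> * c 1"
    by (simp add: g_def Lop_multiplier_def)
  moreover have "(\<lambda>n. g n * z ^ n) sums Lop \<gamma> \<delta> f z"
    unfolding g_def using Lop_power_series_sums[OF sums z] .
  moreover have "norm z \<le> 1" using z by simp
  ultimately show ?thesis
    using norm_sums_sub_const_le[of g z] summable by (simp add: norm_g)
qed

lemma Lop_coefficient_condition:
  fixes a b :: "nat \<Rightarrow> complex"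
  assumes "0 \<le> \<gamma>" and "\<gamma> \<le> \<delta>"
    and summable: "summable (\<lambda>k. let m = k + 2 in
           real m ^ 2 * (2 * \<gamma> + (\<delta> - \<gamma>) * (real m - 1)) * (norm (a m) + norm (b m)))"
  shows "summable (\<lambda>k. Lop_multiplier \<gamma> \<delta> (k + 2) * norm (a (k + 2)))"
    and "summable (\<lambda>k. Lop_multiplier \<gamma> \<delta> (k + 2) * norm (b (k + 2)))"
    and "(\<Sum>k. let m = k + 2 in
           real m ^ 2 * (2 * \<gamma> + (\<delta> - \<gamma>) * (real m - 1)) * (norm (a m) + norm (b m)))
         = 2 * ((\<Sum>k. Lop_multiplier \<gamma> \<delta> (k + 2) * norm (a (k + 2)))
              + (\<Sum>k. Lop_multiplier \<gamma> \<delta> (k + 2) * norm (b (k + 2))))"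
proof -
  define A where "A = (\<lambda>k. Lop_multiplier \<gamma> \<delta> (k + 2) * norm (a (k + 2)))"
  define B where "B = (\<lambda>k. Lop_multiplier \<gamma> \<delta> (k + 2) * norm (b (k + 2)))"
  have nonneg: "0 \<le> A k" "0 \<le> B k" for k
    using Lop_multiplier_nonneg[OF assms(1,2)] by (simp_all add: A_def B_def)
  have weight: "(let m = k + 2 in
      real m ^ 2 * (2 * \<gamma> + (\<delta> - \<gamma>) * (real m - 1)) * (norm (a m) + norm (b m)))
      = 2 * A k + 2 * B k" for k
    by (simp add: A_def B_def Lop_multiplier_def Let_def field_simps)
  show "summable A" "summable B"
    by (rule summable_comparison_test'[OF summable, where N = 0], unfold weight,
        simp add: nonneg)+
  then have "(\<lambda>k. 2 * A k + 2 * B k) sums (2 * (suminf A + suminf B))"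
    using sums_add[OF sums_mult sums_mult, OF summable_sums summable_sums]
    by (simp add: distrib_left)
  then show "(\<Sum>k. let m = k + 2 in
      real m ^ 2 * (2 * \<gamma> + (\<delta> - \<gamma>) * (real m - 1)) * (norm (a m) + norm (b m)))
      = 2 * (suminf A + suminf B)"
    unfolding weight by (simp add: sums_iff)
qed

lemma Re_Lop_gt_norm_Lop:
  fixes a b :: "nat \<Rightarrow> complex"
  assumes "0 \<le> \<gamma>" and "\<gamma> \<le> \<delta>" and "lam < \<gamma>" and "a 1 = 1" and "b 1 = 0"
    and sums_s: "\<forall>w\<in>unit_disk. (\<lambda>n. a n * w ^ n) sums s w"
    and sums_t: "\<forall>w\<in>unit_disk. (\<lambda>n. b n * w ^ n) sums t w"
    and summable_a: "summable (\<lambda>k. Lop_multiplier \<gamma> \<delta> (k + 2) * norm (a (k + 2)))"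
    and summable_b: "summable (\<lambda>k. Lop_multiplier \<gamma> \<delta> (k + 2) * norm (b (k + 2)))"
    and sum_le: "(\<Sum>k. Lop_multiplier \<gamma> \<delta> (k + 2) * norm (a (k + 2)))
      + (\<Sum>k. Lop_multiplier \<gamma> \<delta> (k + 2) * norm (b (k + 2))) \<le> \<gamma> - lam"
    and z: "z \<in> unit_disk"
  shows "norm (Lop \<gamma> \<delta> t z) < Re (Lop \<gamma> \<delta> s z - of_real lam)"
proof -
  define A where "A = (\<Sum>k. Lop_multiplier \<gamma> \<delta> (k + 2) * norm (a (k + 2)))"
  define B where "B = (\<Sum>k. Lop_multiplier \<gamma> \<delta> (k + 2) * norm (b (k + 2)))"
  have "norm (Lop \<gamma> \<delta> s z - of_real \<gamma>) \<le> norm z * A"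
    using norm_Lop_sub_le[OF sums_s z assms(1,2) summable_a] \<open>a 1 = 1\<close> by (simp add: A_def)
  then have "\<gamma> - norm z * A \<le> Re (Lop \<gamma> \<delta> s z)"
    using abs_Re_le_cmod[of "Lop \<gamma> \<delta> s z - of_real \<gamma>"] by simp
  moreover have "norm (Lop \<gamma> \<delta> t z) \<le> norm z * B"
    using norm_Lop_sub_le[OF sums_t z assms(1,2) summable_b] \<open>b 1 = 0\<close> by (simp add: B_def)
  moreover have "norm z * (A + B) \<le> norm z * (\<gamma> - lam)"
    using sum_le by (simp add: A_def B_def mult_left_mono)
  moreover have "norm z * (\<gamma> - lam) < \<gamma> - lam"
    using z \<open>lam < \<gamma>\<close> by simp
  ultimately show ?thesis
    by (simp add: distrib_left)
qed

theorem theorem8: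
  fixes \<gamma> \<delta> lam :: real and s t :: "complex \<Rightarrow> complex" and a b :: "nat \<Rightarrow> complex"
  assumes "0 \<le> lam" and "lam < \<gamma>" and "\<gamma> \<le> \<delta>"
    and "in_H0 s t"
    and "a 0 = 0" and "a 1 = 1" and "b 0 = 0" and "b 1 = 0"
    and "\<forall>z\<in>unit_disk. (\<lambda>m. a m * z ^ m) sums s z"
    and "\<forall>z\<in>unit_disk. (\<lambda>m. b m * z ^ m) sums t z"
    and "summable (\<lambda>k. let m = k + 2 in
           real m ^ 2 * (2 * \<gamma> + (\<delta> - \<gamma>) * (real m - 1)) * (norm (a m) + norm (b m)))"
    and "(\<Sum>k. let m = k + 2 in
           real m ^ 2 * (2 * \<gamma> + (\<delta> - \<gamma>) * (real m - 1)) * (norm (a m) + norm (b m)))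
         \<le> 2 * (\<gamma> - lam)"
  shows "in_RH0 \<gamma> \<delta> lam s t"
proof -
  have "0 \<le> \<gamma>" using assms(1,2) by linarith
  note coefficients = Lop_coefficient_condition[OF \<open>0 \<le> \<gamma>\<close> \<open>\<gamma> \<le> \<delta>\<close> assms(11)]
  have "\<forall>z\<in>unit_disk. Re (Lop \<gamma> \<delta> s z - of_real lam) > norm (Lop \<gamma> \<delta> t z)"
    using Re_Lop_gt_norm_Lop[OF \<open>0 \<le> \<gamma>\<close> \<open>\<gamma> \<le> \<delta>\<close> \<open>lam < \<gamma>\<close> \<open>a 1 = 1\<close> \<open>b 1 = 0\<close>
        assms(9,10) coefficients(1,2)] assms(12) coefficients(3)
    by simp
  then show ?thesis
    using \<open>in_H0 s t\<close> by (simp add: in_RH0_def)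
qed

end
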